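(* Let $G$ be a graph and let $v$ be a cut vertex of $G$ which decomposes $G$ into $G_1=G(V_1)$ and $H=G(U)$, where $H$ is a cycle. Let $f$ be a divisor on $G$ such that $f_{N(H)}$ is good, and put $r=\rho_{G_1}(f_{G/H})$. Then $$\rho_G(f)=\begin{cases} r & \text{if } \rho_{G_1}(f_{G/H}-2\epsilon_v)\ge r-1,\\ r-1 & \text{if } \rho_{G_1}(f_{G/H}-2\epsilon_v)=r-2.\end{cases}$$
   Context: Graphs are finite, undirected, connected, loopless, possibly with multiple edges; $G(W)$ is the induced subgraph on $W$. A cycle is a connected graph with at least two vertices, all of degree $2$. A vertex $v$ is a cut vertex if removing it disconnects $G$; it decomposes $G$ into $G_1=G(V_1)$ and $H=G(U)$ if $V(G)=V_1\cup U$, $V_1\cap U=\{v\}$, both induced subgraphs are connected, and no edge joins $V_1\setminus\{v\}$ to $U\setminus\{v\}$. A divisor is a function $V\to\mathbb{Z}$, $\deg(f)=\sum f(u)$; $\epsilon_v$ is the divisor with value $1$ at $v$ and $0$ elsewhere. Contraction: $f_{G/H}$ is the divisor on $G_1$ with $f_{G/H}(u)=f(u)$ for $u\in V_1\setminus\{v\}$, $f_{G/H}(v)=\sum_{u\in U}f(u)$. Zero: $f_{N(H)}$ is the divisor on $H$ with $f_{N(H)}(u)=f(u)$ for $u\in U\setminus\{v\}$ and $f_{N(H)}(v)=-\sum_{u\in U\setminus\{v\}}f(u)$. Laplacian $\Delta_X(u,u)=\deg(u)$, $\Delta_X(u,w)=-e(u,w)$ for $u\ne w$; $f\sim g$ on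 $X$ if $g=f+x\Delta_X$, $x$ integral. Effective: all values $\ge0$; L-effective: equivalent to an effective divisor. A degree-$0$ divisor on the cycle $H$ is good if it is L-effective on $H$, bad otherwise. The rank $\rho_X(f)$ on a graph $X$ is $-1$ if $f$ is not L-effective on $X$, otherwise the largest $r\ge0$ with $f-\lambda$ L-effective on $X$ for all effective $\lambda$ of degree $r$ on $X$. *)

theory Defs
  imports Main
begin

text \<open>A (multi)graph on a finite vertex set W is given by an edge-multiplicity
function e (e u w = number of edges joining u and w). Induced subgraphs G(W')
are (W', e). Divisors are functions 'a => int, only their values on the
vertex set matter.\<close>

definition adj_in :: "'a set \<Rightarrow> ('a \<Rightarrow> 'a \<Rightarrow> nat) \<Rightarrow> 'a \<Rightarrow> 'a \<Rightarrow> bool" where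
  "adj_in W e u w \<longleftrightarrow> u \<in> W \<and> w \<in> W \<and> e u w > 0"

definition connected_on :: "'a set \<Rightarrow> ('a \<Rightarrow> 'a \<Rightarrow> nat) \<Rightarrow> bool" where
  "connected_on W e \<longleftrightarrow> W \<noteq> {} \<and> (\<forall>u\<in>W. \<forall>w\<in>W. (adj_in W e)\<^sup>*\<^sup>* u w)"

definition graph :: "'a set \<Rightarrow> ('a \<Rightarrow> 'a \<Rightarrow> nat) \<Rightarrow> bool" where
  "graph W e \<longleftrightarrow> finite W \<and> (\<forall>u w. e u w = e w u) \<and> (\<forall>u. e u u = 0) \<and> connected_on W e"

definition vdeg :: "'a set \<Rightarrow> ('a \<Rightarrow> 'a \<Rightarrow> nat) \<Rightarrow> 'a \<Rightarrow> nat" where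
  "vdeg W e u = (\<Sum>w\<in>W. e u w)"

definition is_cycle :: "'a set \<Rightarrow> ('a \<Rightarrow> 'a \<Rightarrow> nat) \<Rightarrow> bool" where
  "is_cycle W e \<longleftrightarrow> graph W e \<and> card W \<ge> 2 \<and> (\<forall>u\<in>W. vdeg W e u = 2)"

definition cut_vertex :: "'a set \<Rightarrow> ('a \<Rightarrow> 'a \<Rightarrow> nat) \<Rightarrow> 'a \<Rightarrow> bool" where
  "cut_vertex V e v \<longleftrightarrow> v \<in> V \<and> \<not> connected_on (V - {v}) e"

definition decomposes :: "'a set \<Rightarrow> ('a \<Rightarrow> 'a \<Rightarrow> nat) \<Rightarrow> 'a \<Rightarrow> 'a set \<Rightarrow> 'a set \<Rightarrow> bool" where
  "decomposes V e v V1 U \<longleftrightarrow> V = V1 \<union> U \<and> V1 \<inter> U = {v} \<and>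
     connected_on V1 e \<and> connected_on U e \<and>
     (\<forall>a\<in>V1 - {v}. \<forall>b\<in>U - {v}. e a b = 0)"

definition laplacian :: "'a set \<Rightarrow> ('a \<Rightarrow> 'a \<Rightarrow> nat) \<Rightarrow> 'a \<Rightarrow> 'a \<Rightarrow> int" where
  "laplacian W e u w = (if u = w then int (vdeg W e u) else - int (e u w))"

definition div_deg :: "'a set \<Rightarrow> ('a \<Rightarrow> int) \<Rightarrow> int" where
  "div_deg W f = (\<Sum>u\<in>W. f u)"

definition effective :: "'a set \<Rightarrow> ('a \<Rightarrow> int) \<Rightarrow> bool" where
  "effective W f \<longleftrightarrow> (\<forall>u\<in>W. f u \<ge> 0)"

definition lin_equiv :: "'a set \<Rightarrow> ('a \<Rightarrow> 'a \<Rightarrow> nat) \<Rightarrow> ('a \<Rightarrow> int) \<Rightarrow> ('a \<Rightarrow> int) \<Rightarrow> bool" where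
  "lin_equiv W e f g \<longleftrightarrow> (\<exists>x :: 'a \<Rightarrow> int. \<forall>w\<in>W. g w = f w + (\<Sum>u\<in>W. x u * laplacian W e u w))"

definition L_effective :: "'a set \<Rightarrow> ('a \<Rightarrow> 'a \<Rightarrow> nat) \<Rightarrow> ('a \<Rightarrow> int) \<Rightarrow> bool" where
  "L_effective W e f \<longleftrightarrow> (\<exists>g. effective W g \<and> lin_equiv W e f g)"

definition div_rank :: "'a set \<Rightarrow> ('a \<Rightarrow> 'a \<Rightarrow> nat) \<Rightarrow> ('a \<Rightarrow> int) \<Rightarrow> int" where
  "div_rank W e f = (if \<not> L_effective W e f then -1
     else int (GREATEST r :: nat. \<forall>lam. effective W lam \<and> div_deg W lam = int r
                                 \<longrightarrow> L_effective W e (\<lambda>u. f u - lam u)))"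

definition eps :: "'a \<Rightarrow> 'a \<Rightarrow> int" where
  "eps v = (\<lambda>u. if u = v then 1 else 0)"

text \<open>f_{G/H}: divisor on G_1 = G(V1).\<close>
definition contract_div :: "'a set \<Rightarrow> 'a \<Rightarrow> ('a \<Rightarrow> int) \<Rightarrow> 'a \<Rightarrow> int" where
  "contract_div U v f = (\<lambda>u. if u = v then (\<Sum>w\<in>U. f w) else f u)"

text \<open>f_{N(H)}: divisor on H = G(U).\<close>
definition zero_div :: "'a set \<Rightarrow> 'a \<Rightarrow> ('a \<Rightarrow> int) \<Rightarrow> 'a \<Rightarrow> int" where
  "zero_div U v f = (\<lambda>u. if u = v then - (\<Sum>w\<in>U - {v}. f w) else f u)"

definition good :: "'a set \<Rightarrow> ('a \<Rightarrow> 'a \<Rightarrow> nat) \<Rightarrow> ('a \<Rightarrow> int) \<Rightarrow> bool" where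
  "good U e g \<longleftrightarrow> div_deg U g = 0 \<and> L_effective U e g"

end

theory Submission
  imports Defs
begin

text \<open>The Laplacian of G splits at the cut vertex v: a divisor on G is principal iff its
  contraction to G_1 and its zeroing on H are principal. Hence a divisor E is L-effective on G iff,
  for some c \<ge> 0, E_{G/H} - c \<epsilon>_v is L-effective on G_1 and E_{N(H)} + c \<epsilon>_v is
  L-effective on H. On the cycle H every divisor of positive degree is L-effective, because a
  reduced divisor has at most genus = 1 chip away from its base vertex; and \<epsilon>_u - \<epsilon>_v is
  never principal, so c = 0 is impossible once \<lambda> has a chip on H - v. Distributing the chips
  of an effective \<lambda> of degree k between G_1 and H then gives \<rho>_G(f) \<ge> k iff
  \<rho>_{G_1}(f_{G/H}) \<ge> k and \<rho>_{G_1}(f_{G/H} - 2\<epsilon>_v) \<ge> k - 1, that is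
  \<rho>_G(f) = min(r, \<rho>_{G_1}(f_{G/H} - 2\<epsilon>_v) + 1).\<close>

definition laplace :: "'a set \<Rightarrow> ('a \<Rightarrow> 'a \<Rightarrow> nat) \<Rightarrow> ('a \<Rightarrow> int) \<Rightarrow> 'a \<Rightarrow> int" where
  "laplace W e x w = (\<Sum>u\<in>W. int (e u w) * (x w - x u))"

definition principal :: "'a set \<Rightarrow> ('a \<Rightarrow> 'a \<Rightarrow> nat) \<Rightarrow> ('a \<Rightarrow> int) \<Rightarrow> bool" where
  "principal W e D \<longleftrightarrow> (\<exists>x. \<forall>w\<in>W. D w = laplace W e x w)"

lemma laplace_cong:
  "(\<And>u. u \<in> W \<Longrightarrow> x u = y u) \<Longrightarrow> w \<in> W \<Longrightarrow> laplace W e x w = laplace W e y w"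
  unfolding laplace_def by (intro sum.cong) auto

lemma laplace_diff: "laplace W e (\<lambda>u. x u - y u) w = laplace W e x w - laplace W e y w"
  unfolding laplace_def sum_subtractf[symmetric] by (rule sum.cong) (simp_all add: algebra_simps)

lemma laplace_diff_const: "laplace W e (\<lambda>u. x u - c) w = laplace W e x w"
  unfolding laplace_def by simp

lemma laplace_indicator:
  assumes "finite W"
  shows "laplace W e (\<lambda>u. if u \<in> S then 1 else 0) w =
    (if w \<in> S then (\<Sum>u\<in>W-S. int (e u w)) else - (\<Sum>u\<in>W\<inter>S. int (e u w)))"
proof (cases "w \<in> S")
  case True
  then have "laplace W e (\<lambda>u. if u \<in> S then 1 else 0) w = (\<Sum>u\<in>W. if u \<in> S then 0 else int (e u w))"
    unfolding laplace_def by (intro sum.cong) auto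
  then show ?thesis using True assms by (simp add: sum.If_cases Diff_eq)
next
  case False
  then have "laplace W e (\<lambda>u. if u \<in> S then 1 else 0) w = (\<Sum>u\<in>W. if u \<in> S then - int (e u w) else 0)"
    unfolding laplace_def by (intro sum.cong) auto
  then show ?thesis using False assms by (simp add: sum.If_cases sum_negf)
qed

lemma principal_cong: "principal W e A \<Longrightarrow> (\<And>w. w \<in> W \<Longrightarrow> A w = B w) \<Longrightarrow> principal W e B"
  unfolding principal_def by auto

lemma principal_diff:
  assumes "principal W e A" "principal W e B"
  shows "principal W e (\<lambda>w. A w - B w)"
proof -
  obtain x y where "\<forall>w\<in>W. A w = laplace W e x w" "\<forall>w\<in>W. B w = laplace W e y w"
    using assms unfolding principal_def by blast
  then have "\<forall>w\<in>W. A w - B w = laplace W e (\<lambda>u. x u - y u) w" by (simp add: laplace_diff)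
  then show ?thesis unfolding principal_def by blast
qed

lemma effective_deg_0_eq_0:
  assumes "finite W" "effective W g" "div_deg W g = 0" "w \<in> W"
  shows "g w = 0"
  using assms sum_nonneg_eq_0_iff[of W g] unfolding effective_def div_deg_def by blast

locale multigraph =
  fixes e :: "'a \<Rightarrow> 'a \<Rightarrow> nat"
  assumes edge_sym: "e u w = e w u" and loopless: "e u u = 0"
begin

lemma sum_laplacian_eq_laplace:
  assumes "finite W" "w \<in> W"
  shows "(\<Sum>u\<in>W. x u * laplacian W e u w) = laplace W e x w"
proof -
  have deg: "int (vdeg W e w) = (\<Sum>u\<in>W-{w}. int (e u w))"
    using assms by (simp add: vdeg_def edge_sym sum.remove loopless)
  have "(\<Sum>u\<in>W. x u * laplacian W e u w)
      = x w * int (vdeg W e w) - (\<Sum>u\<in>W-{w}. int (e u w) * x u)"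
    using assms by (simp add: sum.remove laplacian_def sum_negf algebra_simps)
  also have "\<dots> = (\<Sum>u\<in>W-{w}. int (e u w) * (x w - x u))"
    unfolding deg by (simp add: algebra_simps sum_distrib_left sum_subtractf)
  also have "\<dots> = laplace W e x w"
    unfolding laplace_def using assms by (simp add: sum.remove)
  finally show ?thesis .
qed

lemma lin_equiv_iff_principal:
  assumes "finite W"
  shows "lin_equiv W e f g \<longleftrightarrow> principal W e (\<lambda>w. g w - f w)"
  unfolding lin_equiv_def principal_def
  using sum_laplacian_eq_laplace[OF assms] by (auto simp: algebra_simps)

lemma L_effective_iff:
  assumes "finite W"
  shows "L_effective W e f \<longleftrightarrow> (\<exists>g. effective W g \<and> principal W e (\<lambda>w. g w - f w))"
  unfolding L_effective_def lin_equiv_iff_principal[OF assms] ..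

lemma sum_edges_swap:
  "(\<Sum>w\<in>M. \<Sum>u\<in>M. int (e u w) * x u) = (\<Sum>w\<in>M. \<Sum>u\<in>M. int (e u w) * x w)"
  by (subst sum.swap) (simp add: edge_sym)

lemma sum_laplace_subset:
  assumes "finite W" "M \<subseteq> W"
  shows "(\<Sum>w\<in>M. laplace W e x w) = (\<Sum>w\<in>M. \<Sum>u\<in>W-M. int (e u w) * (x w - x u))"
proof -
  have "laplace W e x w = (\<Sum>u\<in>M. int (e u w) * (x w - x u)) + (\<Sum>u\<in>W-M. int (e u w) * (x w - x u))" for w
    unfolding laplace_def using assms by (simp add: sum.subset_diff[of M W] finite_subset add.commute)
  moreover have "(\<Sum>w\<in>M. \<Sum>u\<in>M. int (e u w) * (x w - x u)) = 0"
    using sum_edges_swap[where M=M and x=x] by (simp add: algebra_simps sum_subtractf)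
  ultimately show ?thesis by (simp add: sum.distrib)
qed

lemma sum_laplace_eq_0: "finite W \<Longrightarrow> (\<Sum>w\<in>W. laplace W e x w) = 0"
  using sum_laplace_subset[of W W x] by simp

lemma principal_sum_eq_0:
  assumes "finite W" "principal W e A"
  shows "(\<Sum>w\<in>W. A w) = 0"
  using assms sum_laplace_eq_0 unfolding principal_def by (metis (no_types, lifting) sum.cong)

lemma L_effective_cong:
  assumes "finite W" "L_effective W e f" "\<And>w. w \<in> W \<Longrightarrow> f w = g w"
  shows "L_effective W e g"
  using assms(2,3) principal_cong unfolding L_effective_iff[OF assms(1)] by fastforce

lemma L_effective_add_effective:
  assumes "finite W" "L_effective W e f" "effective W h"
  shows "L_effective W e (\<lambda>u. f u + h u)"
proof -
  obtain g where "effective W g" "principal W e (\<lambda>w. g w - f w)"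
    using assms(1,2) L_effective_iff by blast
  moreover have "effective W (\<lambda>u. g u + h u)" using calculation(1) assms(3) unfolding effective_def by auto
  ultimately show ?thesis unfolding L_effective_iff[OF assms(1)] by force
qed

lemma div_deg_nonneg_if_L_effective:
  assumes "finite W" "L_effective W e f"
  shows "div_deg W f \<ge> 0"
proof -
  obtain g where g: "effective W g" "principal W e (\<lambda>w. g w - f w)"
    using assms L_effective_iff by blast
  then have "div_deg W f = (\<Sum>w\<in>W. g w)"
    using principal_sum_eq_0[OF assms(1) g(2)] unfolding div_deg_def by (simp add: sum_subtractf)
  also have "\<dots> \<ge> 0" using g(1) unfolding effective_def by (simp add: sum_nonneg)
  finally show ?thesis .
qed

lemma principal_uminus_if_L_effective_deg_0:
  assumes "finite W" "L_effective W e f" "div_deg W f = 0"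
  shows "principal W e (\<lambda>w. - f w)"
proof -
  obtain g where g: "effective W g" "principal W e (\<lambda>w. g w - f w)"
    using assms L_effective_iff by blast
  then have "div_deg W g = 0"
    using principal_sum_eq_0[OF assms(1) g(2)] assms(3) unfolding div_deg_def by (simp add: sum_subtractf)
  then show ?thesis
    using g effective_deg_0_eq_0[OF assms(1) g(1)] by (auto elim: principal_cong)
qed

end

definition rank_at_least :: "'a set \<Rightarrow> ('a \<Rightarrow> 'a \<Rightarrow> nat) \<Rightarrow> ('a \<Rightarrow> int) \<Rightarrow> nat \<Rightarrow> bool" where
  "rank_at_least W e f k \<longleftrightarrow>
     (\<forall>lam. effective W lam \<and> div_deg W lam = int k \<longrightarrow> L_effective W e (\<lambda>u. f u - lam u))"

lemma div_rank_ge_minus_1: "div_rank W e f \<ge> -1"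
  unfolding div_rank_def by simp

lemma int_eq_if_nat_le_iff:
  fixes a b :: int
  assumes "-1 \<le> a" "-1 \<le> b" "\<And>k::nat. int k \<le> a \<longleftrightarrow> int k \<le> b"
  shows "a = b"
  using assms(3)[of "nat a"] assms(3)[of "nat b"] assms(1,2) by linarith

lemma effective_eps: "effective W (\<lambda>u. int k * eps w u)"
  unfolding effective_def eps_def by simp

lemma div_deg_eps: "finite W \<Longrightarrow> w \<in> W \<Longrightarrow> div_deg W (\<lambda>u. c * eps w u) = c"
  unfolding div_deg_def eps_def by (simp add: if_distrib cong: if_cong)

context multigraph
begin

lemma rank_at_least_0_iff:
  assumes "finite W"
  shows "rank_at_least W e f 0 \<longleftrightarrow> L_effective W e f"
proof
  assume "rank_at_least W e f 0"
  then show "L_effective W e f"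
    unfolding rank_at_least_def by (auto dest: spec[of _ "\<lambda>_. 0"] simp: effective_def div_deg_def)
next
  assume "L_effective W e f"
  then show "rank_at_least W e f 0"
    unfolding rank_at_least_def
    using L_effective_cong[OF assms] effective_deg_0_eq_0[OF assms] by force
qed

lemma rank_at_least_Suc_imp:
  assumes "finite W" "w \<in> W" "rank_at_least W e f (Suc k)"
  shows "rank_at_least W e f k"
  unfolding rank_at_least_def
proof (intro allI impI)
  fix lam assume lam: "effective W lam \<and> div_deg W lam = int k"
  let ?lam' = "\<lambda>u. lam u + eps w u"
  have "effective W ?lam'" using lam unfolding effective_def eps_def by auto
  moreover have "div_deg W ?lam' = int (Suc k)"
    using lam div_deg_eps[OF assms(1,2), of 1] by (simp add: div_deg_def sum.distrib)
  ultimately have "L_effective W e (\<lambda>u. f u - ?lam' u)"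
    using assms(3) unfolding rank_at_least_def by blast
  then have "L_effective W e (\<lambda>u. (f u - ?lam' u) + int 1 * eps w u)"
    by (rule L_effective_add_effective[OF assms(1) _ effective_eps])
  then show "L_effective W e (\<lambda>u. f u - lam u)" by simp
qed

lemma rank_at_least_le_div_deg:
  assumes "finite W" "w \<in> W" "rank_at_least W e f k"
  shows "int k \<le> div_deg W f"
proof -
  have "L_effective W e (\<lambda>u. f u - int k * eps w u)"
    using assms(3) effective_eps[of W k w] div_deg_eps[OF assms(1,2), of "int k"]
    unfolding rank_at_least_def by blast
  then have "0 \<le> div_deg W (\<lambda>u. f u - int k * eps w u)"
    by (rule div_deg_nonneg_if_L_effective[OF assms(1)])
  also have "\<dots> = div_deg W f - int k"
    using div_deg_eps[OF assms(1,2), of "int k"] unfolding div_deg_def by (simp add: sum_subtractf)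
  finally show ?thesis by simp
qed

lemma le_div_rank_iff:
  assumes "finite W" "W \<noteq> {}"
  shows "int k \<le> div_rank W e f \<longleftrightarrow> rank_at_least W e f k"
proof -
  obtain w where w: "w \<in> W" using assms(2) by blast
  have step: "rank_at_least W e f (Suc n) \<le> rank_at_least W e f n" for n
    by (rule le_boolI) (rule rank_at_least_Suc_imp[OF assms(1) w])
  have antimono: "rank_at_least W e f j" if "rank_at_least W e f i" "j \<le> i" for i j
    using lift_Suc_antimono_le[of "rank_at_least W e f", OF step that(2)] that(1) by (blast dest: le_boolD)
  have bounded: "i \<le> nat (div_deg W f)" if "rank_at_least W e f i" for i
    using rank_at_least_le_div_deg[OF assms(1) w that] by linarith
  show ?thesis
  proof (cases "L_effective W e f")
    case False
    then have "\<not> rank_at_least W e f k"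
      using antimono[of k 0] rank_at_least_0_iff[OF assms(1)] by auto
    then show ?thesis using False by (simp add: div_rank_def)
  next
    case True
    let ?r = "GREATEST r. rank_at_least W e f r"
    have "rank_at_least W e f 0" using True rank_at_least_0_iff[OF assms(1)] by simp
    then have r: "rank_at_least W e f ?r" using GreatestI_nat bounded by blast
    have "div_rank W e f = int ?r" using True unfolding div_rank_def rank_at_least_def by simp
    then have "int k \<le> div_rank W e f \<longleftrightarrow> k \<le> ?r" by simp
    also have "\<dots> \<longleftrightarrow> rank_at_least W e f k"
      using antimono[OF r] Greatest_le_nat[OF _ bounded] by blast
    finally show ?thesis .
  qed
qed

end

lemma exists_edge_leaving:
  assumes "connected_on W e" "M \<subseteq> W" "a \<in> M" "b \<in> W - M"
  shows "\<exists>w\<in>M. \<exists>u\<in>W - M. e w u > 0"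
proof -
  have "(adj_in W e)\<^sup>*\<^sup>* a b" using assms unfolding connected_on_def by blast
  then have "b \<in> M \<or> (\<exists>w\<in>M. \<exists>u\<in>W - M. e w u > 0)"
    by (induction rule: rtranclp_induct) (use assms in \<open>auto simp: adj_in_def\<close>)
  then show ?thesis using assms by blast
qed

definition inner_edge_sum :: "('a \<Rightarrow> 'a \<Rightarrow> nat) \<Rightarrow> 'a set \<Rightarrow> int" where
  "inner_edge_sum e B = (\<Sum>a\<in>B. \<Sum>b\<in>B. int (e a b))"

context multigraph
begin

lemma inner_edge_sum_insert:
  assumes "finite B" "w \<notin> B"
  shows "inner_edge_sum e (insert w B) = inner_edge_sum e B + 2 * (\<Sum>b\<in>B. int (e b w))"
  using assms by (simp add: inner_edge_sum_def sum.distrib loopless edge_sym[of w])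

lemma even_inner_edge_sum: "finite B \<Longrightarrow> even (inner_edge_sum e B)"
  by (induction rule: finite_induct) (simp_all add: inner_edge_sum_insert, simp add: inner_edge_sum_def)

lemma sum_vdeg_subset:
  assumes "finite W" "M \<subseteq> W"
  shows "(\<Sum>w\<in>M. int (vdeg W e w)) = inner_edge_sum e M + (\<Sum>w\<in>M. \<Sum>u\<in>W-M. int (e w u))"
  using assms unfolding vdeg_def inner_edge_sum_def
  by (simp add: sum.subset_diff[of M W] sum.distrib finite_subset)

text \<open>Take \<open>M\<close> the set where a firing script for \<open>\<epsilon>\<^sub>u - \<epsilon>\<^sub>v\<close> is maximal: exactly one edge
  can leave \<open>M\<close>, but with all degrees even the number of edges leaving any vertex set is even.\<close>
lemma not_principal_eps_diff:
  assumes fin: "finite W" and con: "connected_on W e" and even_deg: "\<And>w. w \<in> W \<Longrightarrow> even (vdeg W e w)"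
    and "u \<in> W" "v \<in> W" "u \<noteq> v"
  shows "\<not> principal W e (\<lambda>w. eps u w - eps v w)"
proof
  assume "principal W e (\<lambda>w. eps u w - eps v w)"
  then obtain x where x: "\<And>w. w \<in> W \<Longrightarrow> eps u w - eps v w = laplace W e x w"
    unfolding principal_def by blast
  define M where "M = {w\<in>W. x w = Max (x ` W)}"
  have MW: "M \<subseteq> W" and fM: "finite M" using fin unfolding M_def by auto
  have gap: "x w - x w' \<ge> 1" if "w \<in> M" "w' \<in> W - M" for w w'
  proof -
    have "x w' \<le> Max (x ` W)" "x w' \<noteq> Max (x ` W)" using that fin unfolding M_def by auto
    then show ?thesis using that unfolding M_def by simp
  qed
  have "Max (x ` W) \<in> x ` W" using fin \<open>u \<in> W\<close> by (intro Max_in) auto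
  then obtain a where a: "a \<in> M" unfolding M_def by force
  have "M \<noteq> W"
  proof
    assume "M = W"
    then have "x w = x v" if "w \<in> W" for w
      using that \<open>v \<in> W\<close> unfolding M_def by (metis (mono_tags, lifting) mem_Collect_eq)
    then have "laplace W e x v = 0" unfolding laplace_def by simp
    then show False using x[OF \<open>v \<in> W\<close>] \<open>u \<noteq> v\<close> by (simp add: eps_def)
  qed
  then obtain b where b: "b \<in> W - M" using MW by blast
  obtain w0 u0 where w0: "w0 \<in> M" "u0 \<in> W - M" "e w0 u0 > 0"
    using exists_edge_leaving[OF con MW a b] by blast
  define cut where "cut = (\<Sum>w\<in>M. \<Sum>u\<in>W-M. int (e w u))"
  have "int (e w u) \<le> int (e u w) * (x w - x u)" if "w \<in> M" "u \<in> W - M" for w u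
    using mult_left_mono[OF gap[OF that], of "int (e u w)"] by (simp add: edge_sym)
  then have "cut \<le> (\<Sum>w\<in>M. laplace W e x w)"
    unfolding sum_laplace_subset[OF fin MW] cut_def by (intro sum_mono) auto
  also have "\<dots> = (\<Sum>w\<in>M. eps u w) - (\<Sum>w\<in>M. eps v w)"
    using x MW by (simp add: sum_subtractf[symmetric] subset_iff)
  also have "\<dots> \<le> 1"
    using fM by (simp add: eps_def sum.If_cases sum_nonneg)
  finally have "cut \<le> 1" .
  moreover have "int (e w0 u0) \<le> cut"
    unfolding cut_def using w0 fin fM
    by (intro order_trans[OF member_le_sum[of u0] member_le_sum[of w0]] sum_nonneg) auto
  ultimately have "cut = 1" using w0(3) by linarith
  moreover have "even (\<Sum>w\<in>M. int (vdeg W e w))"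
    using even_deg MW by (auto intro!: dvd_sum)
  ultimately show False
    using sum_vdeg_subset[OF fin MW] even_inner_edge_sum[OF fM] unfolding cut_def by simp
qed

end

definition graph_dist :: "'a set \<Rightarrow> ('a \<Rightarrow> 'a \<Rightarrow> nat) \<Rightarrow> 'a \<Rightarrow> 'a \<Rightarrow> nat" where
  "graph_dist W e q w = (LEAST k. (adj_in W e ^^ k) q w)"

lemma relpowp_graph_dist:
  assumes "connected_on W e" "q \<in> W" "w \<in> W"
  shows "(adj_in W e ^^ graph_dist W e q w) q w"
proof -
  obtain n where "(adj_in W e ^^ n) q w"
    using assms rtranclp_imp_relpowp unfolding connected_on_def by metis
  then show ?thesis unfolding graph_dist_def by (rule LeastI)
qed

lemma graph_dist_edge_le:
  assumes "connected_on W e" "q \<in> W" "w \<in> W" "u \<in> W" "e w u > 0"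
  shows "graph_dist W e q u \<le> graph_dist W e q w + 1"
proof -
  have "(adj_in W e ^^ Suc (graph_dist W e q w)) q u"
    using relpowp_graph_dist[OF assms(1-3)] assms(3-5) by (auto simp: adj_in_def)
  then show ?thesis unfolding graph_dist_def using Least_le by (metis Suc_eq_plus1)
qed

context multigraph
begin

lemma exists_graph_dist_parent:
  assumes "connected_on W e" "q \<in> W" "w \<in> W" "w \<noteq> q"
  shows "\<exists>p\<in>W. e p w > 0 \<and> graph_dist W e q p + 1 = graph_dist W e q w"
proof -
  have path: "(adj_in W e ^^ graph_dist W e q w) q w" by (rule relpowp_graph_dist[OF assms(1-3)])
  then obtain k where k: "graph_dist W e q w = Suc k"
    using assms(4) by (cases "graph_dist W e q w") auto
  then obtain p where p: "(adj_in W e ^^ k) q p" "adj_in W e p w"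
    using path by (metis relpowp_Suc_E)
  have "p \<in> W" "e p w > 0" using p(2) unfolding adj_in_def by auto
  moreover have "graph_dist W e q p \<le> k" unfolding graph_dist_def using p(1) by (rule Least_le)
  moreover have "graph_dist W e q w \<le> graph_dist W e q p + 1"
    using graph_dist_edge_le[OF assms(1,2) \<open>p \<in> W\<close> assms(3)] \<open>e p w > 0\<close> by (simp add: edge_sym)
  ultimately show ?thesis using k by force
qed

lemma laplace_ge_at_degree_2:
  assumes "finite W" "w \<in> W" "vdeg W e w = 2" "p \<in> W" "e p w > 0" "\<beta> \<le> \<alpha>"
    and "x w - x p \<ge> \<alpha>" and "\<And>u. u \<in> W \<Longrightarrow> e u w > 0 \<Longrightarrow> x w - x u \<ge> \<beta>"
  shows "laplace W e x w \<ge> \<alpha> + \<beta>"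
proof -
  have deg: "(\<Sum>u\<in>W. int (e u w)) = int (vdeg W e w)"
    unfolding vdeg_def by (simp add: edge_sym[of w])
  have "\<alpha> - \<beta> \<le> int (e p w) * (x w - x p - \<beta>)"
    using assms(5-7) by (simp add: mult_le_cancel_right1 order_trans[OF _ mult_right_mono[of 1]])
  also have "\<dots> \<le> (\<Sum>u\<in>W. int (e u w) * (x w - x u - \<beta>))"
  proof (intro member_le_sum)
    show "0 \<le> int (e u w) * (x w - x u - \<beta>)" if "u \<in> W - {p}" for u
      using assms(8)[of u] that by (cases "e u w = 0") auto
  qed (use assms in auto)
  also have "\<dots> = laplace W e x w - int (vdeg W e w) * \<beta>"
    using deg unfolding laplace_def by (simp add: algebra_simps sum_subtractf sum.distrib flip: sum_distrib_left)
  finally show ?thesis using assms(3) by simp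
qed

text \<open>Fire every vertex according to a concave increasing function of its distance from \<open>q\<close>:
  at distance \<open>d \<ge> 1\<close> the parent edge gains more than the other edge can lose.\<close>
lemma exists_laplace_nonneg_off:
  assumes fin: "finite W" and con: "connected_on W e" and q: "q \<in> W"
    and deg2: "\<And>w. w \<in> W \<Longrightarrow> vdeg W e w = 2"
  shows "\<exists>x. \<forall>w\<in>W-{q}. 0 \<le> D w + laplace W e x w"
proof -
  define K where "K = (\<Sum>w\<in>W. \<bar>D w\<bar>)"
  define N where "N = int (Max (graph_dist W e q ` W))"
  define F where "F t = K * (t * (2 * N + 3) - t * t)" for t :: int
  define x where "x w = F (int (graph_dist W e q w))" for w
  have F_mono: "F s \<le> F t" if "s \<le> t" "t \<le> N + 1" for s t
  proof -
    have "0 \<le> K" unfolding K_def by (simp add: sum_nonneg)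
    moreover have "0 \<le> (t - s) * (2 * N + 3 - t - s)" using that by (simp add: mult_nonneg_nonneg)
    ultimately have "0 \<le> K * ((t - s) * (2 * N + 3 - t - s))" by simp
    then show ?thesis by (simp add: F_def algebra_simps)
  qed
  show ?thesis
  proof (intro exI ballI)
    fix w assume w: "w \<in> W - {q}"
    obtain p where p: "p \<in> W" "e p w > 0" "graph_dist W e q p + 1 = graph_dist W e q w"
      using exists_graph_dist_parent[OF con q] w by blast
    define d where "d = int (graph_dist W e q w)"
    have d_le: "d \<le> N" unfolding d_def N_def using fin w by simp
    have "(F d - F (d - 1)) + (F d - F (d + 1)) \<le> laplace W e x w"
    proof (rule laplace_ge_at_degree_2[OF fin _ deg2 p(1,2)])
      show "F d - F (d + 1) \<le> F d - F (d - 1)" using F_mono[of "d - 1" "d + 1"] d_le by simp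
      have "int (graph_dist W e q p) = d - 1" using p(3) unfolding d_def by linarith
      then show "F d - F (d - 1) \<le> x w - x p" by (simp add: x_def d_def)
      show "F d - F (d + 1) \<le> x w - x u" if "u \<in> W" "e u w > 0" for u
        using F_mono[of "int (graph_dist W e q u)" "d + 1"] d_le
          graph_dist_edge_le[OF con q _ that(1), of w] w that(2)
        by (simp add: x_def d_def edge_sym[of u])
    qed (use w in auto)
    moreover have "(F d - F (d - 1)) + (F d - F (d + 1)) = 2 * K" by (simp add: F_def algebra_simps)
    moreover have "\<bar>D w\<bar> \<le> K" unfolding K_def using fin w by (intro member_le_sum) auto
    ultimately show "0 \<le> D w + laplace W e x w" by linarith
  qed
qed

text \<open>If the values of \<open>x\<close> jumped by more than \<open>\<Sum>\<bar>D\<bar>\<close> just below \<open>t\<close>, the vertices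
  below \<open>t\<close> would together lose more than \<open>\<Sum>\<bar>D\<bar>\<close> chips across an edge leaving them.\<close>
lemma level_set_gap:
  assumes fin: "finite W" and con: "connected_on W e" and q: "q \<in> W" "t \<le> x q"
    and nonneg: "\<forall>w\<in>W-{q}. 0 \<le> D w + laplace W e x w"
    and a: "a \<in> W" "x a < t"
  shows "\<exists>u\<in>W. t - ((\<Sum>w\<in>W. \<bar>D w\<bar>) + 1) \<le> x u \<and> x u < t"
proof (rule ccontr)
  define K where "K = (\<Sum>w\<in>W. \<bar>D w\<bar>)"
  define M where "M = {w\<in>W. x w < t}"
  assume "\<not> ?thesis"
  then have low: "x w < t - (K + 1)" if "w \<in> M" for w
    using that unfolding M_def K_def by force
  have MW: "M \<subseteq> W" and fM: "finite M" and qM: "q \<notin> M"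
    using fin q unfolding M_def by auto
  obtain w0 u0 where w0: "w0 \<in> M" "u0 \<in> W - M" "e w0 u0 > 0"
    using exists_edge_leaving[OF con MW, of a q] a q unfolding M_def by auto
  have "0 \<le> K" unfolding K_def by (simp add: sum_nonneg)
  have cross: "0 \<le> int (e u w) * (x u - x w)" if "w \<in> M" "u \<in> W - M" for w u
  proof -
    have "x w \<le> x u" using low[OF that(1)] that(2) \<open>0 \<le> K\<close> unfolding M_def by auto
    then show ?thesis by simp
  qed
  have gap0: "K + 2 \<le> x u0 - x w0" using low[OF w0(1)] w0(2) unfolding M_def by auto
  also have "\<dots> \<le> int (e u0 w0) * (x u0 - x w0)"
    using mult_right_mono[of 1 "int (e u0 w0)" "x u0 - x w0"] w0(3) gap0 \<open>0 \<le> K\<close>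
    by (simp add: edge_sym[of u0] flip: of_nat_Suc)
  also have "\<dots> \<le> (\<Sum>w\<in>M. \<Sum>u\<in>W-M. int (e u w) * (x u - x w))"
    using w0 fM fin cross
    by (intro order_trans[OF member_le_sum[of u0] member_le_sum[of w0]] sum_nonneg) auto
  also have "\<dots> = - (\<Sum>w\<in>M. laplace W e x w)"
    unfolding sum_laplace_subset[OF fin MW] by (simp add: sum_negf[symmetric] algebra_simps)
  also have "\<dots> \<le> (\<Sum>w\<in>M. D w)"
  proof -
    have "0 \<le> (\<Sum>w\<in>M. D w + laplace W e x w)" using nonneg MW qM by (intro sum_nonneg) auto
    then show ?thesis by (simp add: sum.distrib)
  qed
  also have "\<dots> \<le> K"
    unfolding K_def using MW fin by (intro order_trans[OF sum_mono sum_mono2]) auto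
  finally show False by simp
qed

lemma laplace_nonneg_off_lower_bound:
  assumes fin: "finite W" and con: "connected_on W e" and q: "q \<in> W" "x q = 0"
    and nonneg: "\<forall>w\<in>W-{q}. 0 \<le> D w + laplace W e x w" and "w \<in> W"
  shows "- (int (card W) * ((\<Sum>w\<in>W. \<bar>D w\<bar>) + 1)) \<le> x w"
proof -
  define K where "K = (\<Sum>w\<in>W. \<bar>D w\<bar>)"
  have "0 \<le> K" unfolding K_def by (simp add: sum_nonneg)
  define L where "L j = {w\<in>W. x w < - (int j * (K + 1))}" for j
  have fL: "finite (L j)" and L_Suc: "L (Suc j) \<subseteq> L j" for j
    using fin \<open>0 \<le> K\<close> unfolding L_def by (auto simp: algebra_simps)
  have "L j = {} \<or> card (L j) + j \<le> card W" for j
  proof (induction j)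
    case 0
    show ?case using card_mono[OF fin] by (simp add: L_def)
  next
    case (Suc j)
    show ?case
    proof (cases "L j = {}")
      case True
      then show ?thesis using L_Suc by blast
    next
      case False
      then obtain a where "a \<in> W" "x a < - (int j * (K + 1))" unfolding L_def by blast
      then obtain u where "u \<in> W" "- (int j * (K + 1)) - (K + 1) \<le> x u" "x u < - (int j * (K + 1))"
        using level_set_gap[OF fin con q(1) _ nonneg, of "- (int j * (K + 1))" a] q(2) \<open>0 \<le> K\<close>
        unfolding K_def by auto
      then have "u \<in> L j" "u \<notin> L (Suc j)" unfolding L_def by (auto simp: algebra_simps)
      then have "card (L (Suc j)) < card (L j)" using L_Suc[of j] fL by (intro psubset_card_mono) auto
      then show ?thesis using Suc.IH False by simp
    qed
  qed
  from this[of "card W"] have "L (card W) = {}" using fL by auto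
  then show ?thesis using \<open>w \<in> W\<close> unfolding L_def K_def by force
qed

end

definition reduced :: "'a set \<Rightarrow> ('a \<Rightarrow> 'a \<Rightarrow> nat) \<Rightarrow> 'a \<Rightarrow> ('a \<Rightarrow> int) \<Rightarrow> bool" where
  "reduced W e q D \<longleftrightarrow> (\<forall>w\<in>W-{q}. 0 \<le> D w) \<and>
     (\<forall>S. S \<subseteq> W-{q} \<longrightarrow> S \<noteq> {} \<longrightarrow> (\<exists>w\<in>S. D w < (\<Sum>u\<in>W-S. int (e u w))))"

context multigraph
begin

text \<open>Firing a violating set \<open>S\<close> backwards would lower the total of \<open>x\<close>.\<close>
lemma reduced_if_sum_minimal:
  assumes fin: "finite W"
    and nonneg: "\<forall>w\<in>W-{q}. 0 \<le> D w + laplace W e x w"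
    and minimal: "\<And>y. y q = x q \<Longrightarrow> \<forall>w\<in>W-{q}. 0 \<le> D w + laplace W e y w \<Longrightarrow>
                   (\<Sum>w\<in>W. x w) \<le> (\<Sum>w\<in>W. y w)"
  shows "reduced W e q (\<lambda>w. D w + laplace W e x w)"
  unfolding reduced_def
proof (intro conjI allI impI)
  show "\<forall>w\<in>W-{q}. 0 \<le> D w + laplace W e x w" by (fact nonneg)
  fix S assume S: "S \<subseteq> W - {q}" "S \<noteq> {}"
  show "\<exists>w\<in>S. D w + laplace W e x w < (\<Sum>u\<in>W-S. int (e u w))"
  proof (rule ccontr)
    assume fire: "\<not> ?thesis"
    define y where "y u = x u - (if u \<in> S then 1 else 0)" for u
    have "0 \<le> D w + laplace W e y w" if w: "w \<in> W - {q}" for w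
    proof -
      have "laplace W e y w = laplace W e x w -
          (if w \<in> S then (\<Sum>u\<in>W-S. int (e u w)) else - (\<Sum>u\<in>W\<inter>S. int (e u w)))"
        unfolding y_def by (simp add: laplace_diff laplace_indicator[OF fin])
      moreover have "0 \<le> (\<Sum>u\<in>W\<inter>S. int (e u w))" by (simp add: sum_nonneg)
      moreover have "0 \<le> D w + laplace W e x w" using nonneg w by blast
      ultimately show ?thesis using fire by (cases "w \<in> S") auto
    qed
    moreover have "y q = x q" using S unfolding y_def by auto
    moreover have "(\<Sum>w\<in>W. y w) = (\<Sum>w\<in>W. x w) - int (card S)"
      using S fin unfolding y_def by (simp add: sum_subtractf sum.If_cases Int_absorb1 subset_iff)
    moreover have "card S > 0" using S fin by (simp add: card_gt_0_iff finite_subset)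
    ultimately show False using minimal[of y] by auto
  qed
qed

lemma exists_reduced:
  assumes fin: "finite W" and con: "connected_on W e" and q: "q \<in> W"
    and deg2: "\<And>w. w \<in> W \<Longrightarrow> vdeg W e w = 2"
  shows "\<exists>D'. principal W e (\<lambda>w. D' w - D w) \<and> reduced W e q D'"
proof -
  define feasible where "feasible x \<longleftrightarrow> x q = 0 \<and> (\<forall>w\<in>W-{q}. 0 \<le> D w + laplace W e x w)" for x
  define B where "B = int (card W) * (int (card W) * ((\<Sum>w\<in>W. \<bar>D w\<bar>) + 1))"
  obtain x0 where x0: "\<forall>w\<in>W-{q}. 0 \<le> D w + laplace W e x0 w"
    using exists_laplace_nonneg_off[OF fin con q deg2] by blast
  have "feasible (\<lambda>u. x0 u - x0 q)"
    using x0 unfolding feasible_def by (simp add: laplace_diff_const)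
  have bounded: "- B \<le> (\<Sum>w\<in>W. x w)" if "feasible x" for x
  proof -
    have "(\<Sum>w\<in>W. - (int (card W) * ((\<Sum>w\<in>W. \<bar>D w\<bar>) + 1))) \<le> (\<Sum>w\<in>W. x w)"
      using laplace_nonneg_off_lower_bound[OF fin con q] that unfolding feasible_def
      by (intro sum_mono) auto
    then show ?thesis unfolding B_def by simp
  qed
  obtain x where x: "feasible x"
    and min: "\<And>y. feasible y \<Longrightarrow> nat ((\<Sum>w\<in>W. x w) + B) \<le> nat ((\<Sum>w\<in>W. y w) + B)"
    using ex_has_least_nat[of feasible _ "\<lambda>x. nat ((\<Sum>w\<in>W. x w) + B)"]
      \<open>feasible (\<lambda>u. x0 u - x0 q)\<close> by blast
  have "reduced W e q (\<lambda>w. D w + laplace W e x w)"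
  proof (rule reduced_if_sum_minimal[OF fin])
    show "\<forall>w\<in>W-{q}. 0 \<le> D w + laplace W e x w" using x unfolding feasible_def by blast
    show "(\<Sum>w\<in>W. x w) \<le> (\<Sum>w\<in>W. y w)"
      if "y q = x q" "\<forall>w\<in>W-{q}. 0 \<le> D w + laplace W e y w" for y
      using that x min[of y] bounded[OF x] bounded[of y] unfolding feasible_def by fastforce
  qed
  then show ?thesis unfolding principal_def by force
qed

text \<open>Dhar's burning argument: starting from \<open>{q}\<close>, a reduced divisor lets the fire spread to
  a vertex having fewer chips than edges into the burnt set, until everything burns.\<close>
lemma reduced_burning_bound:
  assumes fin: "finite W" and q: "q \<in> W" and red: "reduced W e q D"
  shows "2 * (\<Sum>w\<in>W-{q}. D w) + 2 * (int (card W) - 1) \<le> (\<Sum>w\<in>W. int (vdeg W e w))"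
proof -
  define burnt where "burnt B \<longleftrightarrow> q \<in> B \<and> B \<subseteq> W \<and>
     2 * (\<Sum>w\<in>B-{q}. D w) + 2 * (int (card B) - 1) \<le> inner_edge_sum e B" for B
  have "burnt {q}" unfolding burnt_def inner_edge_sum_def using q by (simp add: loopless)
  moreover have "\<forall>B. burnt B \<longrightarrow> card B < card W + 1"
    using card_mono[OF fin] unfolding burnt_def by (simp add: less_Suc_eq_le)
  ultimately obtain B where B: "burnt B" and B_max: "\<forall>B'. burnt B' \<longrightarrow> card B' \<le> card B"
    using Lattices_Big.ex_has_greatest_nat[of burnt "{q}" card "card W + 1"] by blast
  have BW: "B \<subseteq> W" and qB: "q \<in> B" and fB: "finite B"
    using B fin unfolding burnt_def by (auto intro: finite_subset)
  have "B = W"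
  proof (rule ccontr)
    assume "B \<noteq> W"
    then have "W - B \<subseteq> W - {q}" "W - B \<noteq> {}" using qB BW by auto
    then obtain w where w: "w \<in> W - B" "D w < (\<Sum>u\<in>W-(W-B). int (e u w))"
      using red unfolding reduced_def by blast
    have "W - (W - B) = B" using BW by blast
    then have "D w + 1 \<le> (\<Sum>u\<in>B. int (e u w))" using w(2) by simp
    moreover have "insert w B - {q} = insert w (B - {q})" using w qB by auto
    ultimately have "burnt (insert w B)"
      using B w fB qB BW by (simp add: burnt_def inner_edge_sum_insert)
    then show False using B_max w fB by fastforce
  qed
  moreover have "inner_edge_sum e W = (\<Sum>w\<in>W. int (vdeg W e w))"
    unfolding inner_edge_sum_def vdeg_def by simp
  ultimately show ?thesis using B unfolding burnt_def by simp
qed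

lemma cycle_L_effective:
  assumes cyc: "is_cycle W e" and deg: "div_deg W D \<ge> 1"
  shows "L_effective W e D"
proof -
  have fin: "finite W" and con: "connected_on W e" and deg2: "\<And>w. w \<in> W \<Longrightarrow> vdeg W e w = 2"
    using cyc unfolding is_cycle_def graph_def by auto
  obtain q where q: "q \<in> W" using con unfolding connected_on_def by blast
  obtain D' where pr: "principal W e (\<lambda>w. D' w - D w)" and red: "reduced W e q D'"
    using exists_reduced[OF fin con q deg2] by blast
  have "(\<Sum>w\<in>W-{q}. D' w) \<le> 1"
    using reduced_burning_bound[OF fin q red] deg2 by simp
  moreover have "(\<Sum>w\<in>W. D' w) = (\<Sum>w\<in>W. D w)"
    using principal_sum_eq_0[OF fin pr] by (simp add: sum_subtractf)
  ultimately have "0 \<le> D' q"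
    using deg fin q unfolding div_deg_def by (simp add: sum.remove)
  then have "effective W D'" using red unfolding reduced_def effective_def by auto
  then show ?thesis using pr unfolding L_effective_iff[OF fin] by blast
qed

end

lemma contract_div_diff:
  "contract_div U v (\<lambda>w. F w - E w) w = contract_div U v F w - contract_div U v E w"
  unfolding contract_div_def by (simp add: sum_subtractf)

lemma zero_div_diff: "zero_div U v (\<lambda>w. F w - E w) w = zero_div U v F w - zero_div U v E w"
  unfolding zero_div_def by (simp add: sum_subtractf)

locale cut_vertex_split = multigraph +
  fixes V V1 U :: "'a set" and v :: 'a
  assumes finite_V: "finite V" and V_eq: "V = V1 \<union> U" and V1_Int_U: "V1 \<inter> U = {v}"
    and no_cross_edge: "\<And>a b. a \<in> V1 - {v} \<Longrightarrow> b \<in> U - {v} \<Longrightarrow> e a b = 0"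
begin

lemma finite_V1: "finite V1" and finite_U: "finite U" and v_in_V1: "v \<in> V1" and v_in_U: "v \<in> U"
  and V1_subset: "V1 \<subseteq> V" and U_subset: "U \<subseteq> V"
  using finite_V V_eq V1_Int_U by auto

lemma eq_v_if_in_V1_U: "u \<in> V1 \<Longrightarrow> u \<in> U \<Longrightarrow> u = v"
  using V1_Int_U by blast

lemma sum_U_remove: "(\<Sum>w\<in>U. g w) = g v + (\<Sum>w\<in>U-{v}. g w)"
  using finite_U v_in_U by (simp add: sum.remove)

lemma sum_U_minus_v_restrict_V1: "(\<Sum>w\<in>U-{v}. if w \<in> V1 then g w else 0) = 0"
  by (intro sum.neutral) (auto dest: eq_v_if_in_V1_U)

lemma sum_V_split: "(\<Sum>w\<in>V. g w) = (\<Sum>w\<in>V1. g w) + (\<Sum>w\<in>U-{v}. g w)"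
proof -
  have "V = V1 \<union> (U - {v})" "V1 \<inter> (U - {v}) = {}" using V_eq V1_Int_U by auto
  then show ?thesis using finite_V1 finite_U by (simp add: sum.union_disjoint)
qed

lemma laplace_split:
  "laplace V e x w = laplace V1 e x w + laplace U e x w - int (e v w) * (x w - x v)"
  using sum.union_inter[OF finite_V1 finite_U, of "\<lambda>u. int (e u w) * (x w - x u)"]
  unfolding laplace_def V_eq V1_Int_U by simp

lemma laplace_V1:
  assumes "w \<in> V1 - {v}"
  shows "laplace V e x w = laplace V1 e x w"
proof -
  have "(\<Sum>u\<in>U-{v}. int (e u w) * (x w - x u)) = 0"
    using no_cross_edge assms by (intro sum.neutral) (auto simp: edge_sym[of _ w])
  then show ?thesis
    using laplace_split[of x w] sum_U_remove[of "\<lambda>u. int (e u w) * (x w - x u)"]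
    unfolding laplace_def by simp
qed

lemma laplace_U:
  assumes "w \<in> U - {v}"
  shows "laplace V e x w = laplace U e x w"
proof -
  have "(\<Sum>u\<in>V1-{v}. int (e u w) * (x w - x u)) = 0"
    using no_cross_edge assms by (intro sum.neutral) auto
  then show ?thesis
    using laplace_split[of x w] finite_V1 v_in_V1 unfolding laplace_def by (simp add: sum.remove)
qed

lemma laplace_v: "laplace V e x v = laplace V1 e x v + laplace U e x v"
  using laplace_split by simp

lemma principal_contract_zero_if_principal:
  assumes "principal V e B"
  shows "principal V1 e (contract_div U v B)" and "principal U e (zero_div U v B)"
proof -
  obtain x where x: "\<forall>w\<in>V. B w = laplace V e x w" using assms unfolding principal_def by blast
  have sum_B: "(\<Sum>w\<in>U-{v}. B w) = - laplace U e x v"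
  proof -
    have "(\<Sum>w\<in>U-{v}. B w) = (\<Sum>w\<in>U-{v}. laplace U e x w)"
      using x laplace_U U_subset by (intro sum.cong) auto
    then show ?thesis using sum_laplace_eq_0[OF finite_U, of x] sum_U_remove[of "laplace U e x"] by simp
  qed
  have "\<forall>w\<in>V1. contract_div U v B w = laplace V1 e x w"
    using x sum_B sum_U_remove[of B] laplace_v laplace_V1 V1_subset v_in_V1
    unfolding contract_div_def by auto
  then show "principal V1 e (contract_div U v B)" unfolding principal_def by blast
  have "\<forall>w\<in>U. zero_div U v B w = laplace U e x w"
    using x sum_B laplace_U U_subset unfolding zero_div_def by auto
  then show "principal U e (zero_div U v B)" unfolding principal_def by blast
qed

lemma principal_if_contract_zero:
  assumes "principal V1 e (contract_div U v B)" and "principal U e (zero_div U v B)"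
  shows "principal V e B"
proof -
  obtain x1 x2 where x1: "\<forall>w\<in>V1. contract_div U v B w = laplace V1 e x1 w"
    and x2: "\<forall>w\<in>U. zero_div U v B w = laplace U e x2 w" using assms unfolding principal_def by blast
  define y where "y w = (if w \<in> U then x2 w - (x2 v - x1 v) else x1 w)" for w
  have y_U: "laplace U e y w = laplace U e x2 w" if "w \<in> U" for w
    using laplace_cong[OF _ that, of y "\<lambda>u. x2 u - (x2 v - x1 v)"] laplace_diff_const
    unfolding y_def by simp
  have y_V1: "laplace V1 e y w = laplace V1 e x1 w" if "w \<in> V1" for w
    using that by (intro laplace_cong) (auto simp: y_def dest: eq_v_if_in_V1_U)
  have "B w = laplace V e y w" if w: "w \<in> V" for w
  proof -
    consider "w = v" | "w \<in> V1 - {v}" | "w \<in> U - {v}" using w V_eq by blast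
    then show ?thesis
    proof cases
      case 1
      have "B v = contract_div U v B v + zero_div U v B v"
        using sum_U_remove[of B] unfolding contract_div_def zero_div_def by simp
      then show ?thesis using 1 x1 x2 v_in_V1 v_in_U y_U y_V1 laplace_v by simp
    next
      case 2
      then show ?thesis using x1 y_V1 laplace_V1 unfolding contract_div_def by auto
    next
      case 3
      then show ?thesis using x2 y_U laplace_U unfolding zero_div_def by auto
    qed
  qed
  then show ?thesis unfolding principal_def by blast
qed

lemma principal_iff_contract_zero:
  "principal V e B \<longleftrightarrow> principal V1 e (contract_div U v B) \<and> principal U e (zero_div U v B)"
  using principal_contract_zero_if_principal principal_if_contract_zero by blast

lemma sum_zero_div: "(\<Sum>w\<in>U. zero_div U v g w) = 0"
  using sum_U_remove[of "zero_div U v g"] unfolding zero_div_def by simp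

lemma div_deg_contract_div: "div_deg V1 (contract_div U v g) = div_deg V g"
proof -
  have "div_deg V1 (contract_div U v g) = contract_div U v g v + (\<Sum>w\<in>V1-{v}. g w)"
    unfolding div_deg_def contract_div_def using finite_V1 v_in_V1 by (simp add: sum.remove)
  also have "\<dots> = (\<Sum>w\<in>V1. g w) + (\<Sum>w\<in>U-{v}. g w)"
    unfolding contract_div_def using sum_U_remove[of g] finite_V1 v_in_V1 by (simp add: sum.remove)
  finally show ?thesis unfolding div_deg_def sum_V_split .
qed

lemma effective_contract_div: "effective V F \<Longrightarrow> effective V1 (contract_div U v F)"
  unfolding effective_def contract_div_def using V1_subset U_subset by (auto intro!: sum_nonneg)

text \<open>\<open>c\<close> is the number of chips that an effective representative of \<open>E\<close> keeps on \<open>U\<close>.\<close>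
lemma L_effective_iff_split:
  "L_effective V e E \<longleftrightarrow> (\<exists>c\<ge>0. L_effective V1 e (\<lambda>u. contract_div U v E u - c * eps v u) \<and>
                               L_effective U e (\<lambda>u. zero_div U v E u + c * eps v u))"
proof
  assume "L_effective V e E"
  then obtain F where F: "effective V F" "principal V e (\<lambda>w. F w - E w)"
    unfolding L_effective_iff[OF finite_V] by blast
  define c where "c = (\<Sum>w\<in>U. F w)"
  have "0 \<le> c" using F(1) U_subset unfolding c_def effective_def by (auto intro: sum_nonneg)
  have pr1: "principal V1 e (\<lambda>w. contract_div U v F w - contract_div U v E w)"
    and pr2: "principal U e (\<lambda>w. zero_div U v F w - zero_div U v E w)"
    using F(2) unfolding principal_iff_contract_zero contract_div_diff zero_div_diff by auto
  have "effective V1 (\<lambda>u. contract_div U v F u - c * eps v u)"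
    using F(1) V1_subset unfolding effective_def contract_div_def eps_def c_def by auto
  moreover have "effective U (\<lambda>u. zero_div U v F u + c * eps v u)"
    using F(1) U_subset sum_U_remove[of F] unfolding effective_def zero_div_def eps_def c_def by auto
  ultimately show "\<exists>c\<ge>0. L_effective V1 e (\<lambda>u. contract_div U v E u - c * eps v u) \<and>
                         L_effective U e (\<lambda>u. zero_div U v E u + c * eps v u)"
    using \<open>0 \<le> c\<close> pr1 pr2 unfolding L_effective_iff[OF finite_V1] L_effective_iff[OF finite_U]
    by (intro exI conjI) (auto elim!: principal_cong)
next
  assume "\<exists>c\<ge>0. L_effective V1 e (\<lambda>u. contract_div U v E u - c * eps v u) \<and>
                L_effective U e (\<lambda>u. zero_div U v E u + c * eps v u)"
  then obtain c B A where B: "effective V1 B" "principal V1 e (\<lambda>w. B w - (contract_div U v E w - c * eps v w))"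
    and A: "effective U A" "principal U e (\<lambda>w. A w - (zero_div U v E w + c * eps v w))"
    unfolding L_effective_iff[OF finite_V1] L_effective_iff[OF finite_U] by blast
  have "(\<Sum>w\<in>U. A w) = c"
    using principal_sum_eq_0[OF finite_U A(2)] sum_zero_div[of E] div_deg_eps[OF finite_U v_in_U, of c]
    unfolding div_deg_def by (simp add: sum_subtractf sum.distrib)
  then have sum_A: "(\<Sum>w\<in>U-{v}. A w) = c - A v" using sum_U_remove[of A] by simp
  define F where "F w = (if w \<in> V1 then B w else 0) + (if w \<in> U then A w else 0)" for w
  have F_V1: "F w = B w" if "w \<in> V1 - {v}" for w using that by (auto simp: F_def dest: eq_v_if_in_V1_U)
  have F_U: "F w = A w" if "w \<in> U - {v}" for w using that by (auto simp: F_def dest: eq_v_if_in_V1_U)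
  have F_v: "F v = B v + A v" using v_in_V1 v_in_U by (simp add: F_def)
  have sum_F: "(\<Sum>w\<in>U-{v}. F w) = c - A v" using F_U sum_A by simp
  have "effective V F" using A(1) B(1) unfolding effective_def F_def by auto
  moreover have "principal V1 e (contract_div U v (\<lambda>w. F w - E w))"
    using B(2) F_V1 F_v sum_F sum_U_remove[of F]
    by (elim principal_cong) (auto simp: contract_div_def eps_def sum_subtractf)
  moreover have "principal U e (zero_div U v (\<lambda>w. F w - E w))"
    using A(2) F_U sum_F
    by (elim principal_cong) (auto simp: zero_div_def eps_def sum_subtractf)
  ultimately show "L_effective V e E"
    unfolding L_effective_iff[OF finite_V] principal_iff_contract_zero by blast
qed

end

locale cut_vertex_cycle = cut_vertex_split +
  fixes f :: "'a \<Rightarrow> int"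
  assumes cycle_U: "is_cycle U e" and good_f: "good U e (zero_div U v f)"
begin

lemma principal_uminus_zero_div: "principal U e (\<lambda>w. - zero_div U v f w)"
  using principal_uminus_if_L_effective_deg_0[OF finite_U] good_f unfolding good_def by blast

lemma exists_vertex_U: "\<exists>u\<in>U. u \<noteq> v"
proof (rule ccontr)
  assume "\<not> ?thesis"
  then have "U \<subseteq> {v}" by blast
  then show False using cycle_U card_mono[of "{v}" U] unfolding is_cycle_def by simp
qed

lemma rank_at_least_contract_div:
  assumes "rank_at_least V e f k"
  shows "rank_at_least V1 e (contract_div U v f) k"
  unfolding rank_at_least_def
proof (intro allI impI)
  fix \<mu> assume \<mu>: "effective V1 \<mu> \<and> div_deg V1 \<mu> = int k"
  define lam where "lam w = (if w \<in> V1 then \<mu> w else 0)" for w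
  have contract_lam: "contract_div U v lam w = \<mu> w" if "w \<in> V1" for w
    using that sum_U_remove[of lam] v_in_V1
    by (auto simp: contract_div_def lam_def sum_U_minus_v_restrict_V1 dest: eq_v_if_in_V1_U)
  have "effective V lam" using \<mu> unfolding lam_def effective_def by auto
  moreover have "div_deg V lam = int k"
    using \<mu> div_deg_contract_div[of lam] contract_lam unfolding div_deg_def by simp
  ultimately have "L_effective V e (\<lambda>u. f u - lam u)"
    using assms unfolding rank_at_least_def by blast
  then obtain c where "c \<ge> 0"
    and "L_effective V1 e (\<lambda>u. contract_div U v (\<lambda>u. f u - lam u) u - c * eps v u)"
    unfolding L_effective_iff_split by blast
  then have "L_effective V1 e (\<lambda>u. (contract_div U v (\<lambda>u. f u - lam u) u - c * eps v u) + c * eps v u)"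
    by (intro L_effective_add_effective[OF finite_V1]) (auto simp: effective_def eps_def)
  then show "L_effective V1 e (\<lambda>u. contract_div U v f u - \<mu> u)"
    by (rule L_effective_cong[OF finite_V1]) (simp add: contract_div_diff contract_lam)
qed

text \<open>Put one of the \<open>k + 1\<close> chips on a vertex \<open>u \<noteq> v\<close> of the cycle. An effective
  representative then keeps at least one chip on \<open>U\<close>, for otherwise \<open>\<epsilon>\<^sub>u - \<epsilon>\<^sub>v\<close> would be principal on \<open>U\<close>.\<close>
lemma rank_at_least_contract_div_minus_2:
  assumes "rank_at_least V e f (Suc k)"
  shows "rank_at_least V1 e (\<lambda>w. contract_div U v f w - 2 * eps v w) k"
  unfolding rank_at_least_def
proof (intro allI impI)
  fix \<mu> assume \<mu>: "effective V1 \<mu> \<and> div_deg V1 \<mu> = int k"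
  obtain u where u: "u \<in> U" "u \<noteq> v" using exists_vertex_U by blast
  define lam where "lam w = (if w \<in> V1 then \<mu> w else 0) + eps u w" for w
  have "u \<notin> V1" using u eq_v_if_in_V1_U by blast
  have contract_lam: "contract_div U v lam w = \<mu> w + eps v w" if "w \<in> V1" for w
    using that sum_U_remove[of lam] v_in_V1 u \<open>u \<notin> V1\<close> finite_U
    by (auto simp: contract_div_def lam_def eps_def sum.distrib sum_U_minus_v_restrict_V1
        dest: eq_v_if_in_V1_U)
  have zero_lam: "zero_div U v lam w = eps u w - eps v w" if "w \<in> U" for w
    using that u finite_U v_in_V1
    by (auto simp: zero_div_def lam_def eps_def sum.distrib sum_U_minus_v_restrict_V1
        dest: eq_v_if_in_V1_U)
  have "effective V lam" using \<mu> unfolding lam_def effective_def eps_def by auto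
  moreover have "div_deg V lam = int (Suc k)"
    using \<mu> div_deg_contract_div[of lam] contract_lam div_deg_eps[OF finite_V1 v_in_V1, of 1]
    unfolding div_deg_def by (simp add: sum.distrib)
  ultimately have "L_effective V e (\<lambda>w. f w - lam w)"
    using assms unfolding rank_at_least_def by blast
  then obtain c where "c \<ge> 0"
    and L1: "L_effective V1 e (\<lambda>w. contract_div U v (\<lambda>w. f w - lam w) w - c * eps v w)"
    and L2: "L_effective U e (\<lambda>w. zero_div U v (\<lambda>w. f w - lam w) w + c * eps v w)"
    unfolding L_effective_iff_split by blast
  have "c \<noteq> 0"
  proof
    assume "c = 0"
    then have "principal U e (\<lambda>w. - (zero_div U v f w - (eps u w - eps v w)))"
      using L2 sum_zero_div[of "\<lambda>w. f w - lam w"]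
      by (intro principal_uminus_if_L_effective_deg_0[OF finite_U])
        (auto simp: div_deg_def zero_div_diff zero_lam elim: L_effective_cong[OF finite_U])
    then have "principal U e (\<lambda>w. - (zero_div U v f w - (eps u w - eps v w)) - (- zero_div U v f w))"
      using principal_uminus_zero_div by (rule principal_diff)
    moreover have "\<not> principal U e (\<lambda>w. eps u w - eps v w)"
      using cycle_U u v_in_U unfolding is_cycle_def graph_def
      by (intro not_principal_eps_diff) auto
    ultimately show False by simp
  qed
  then have "L_effective V1 e
      (\<lambda>w. (contract_div U v (\<lambda>w. f w - lam w) w - c * eps v w) + (c - 1) * eps v w)"
    using \<open>c \<ge> 0\<close> by (intro L_effective_add_effective[OF finite_V1 L1]) (auto simp: effective_def eps_def)
  then show "L_effective V1 e (\<lambda>w. contract_div U v f w - 2 * eps v w - \<mu> w)"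
    by (rule L_effective_cong[OF finite_V1]) (simp add: contract_div_diff contract_lam algebra_simps)
qed

text \<open>If \<open>\<lambda>\<close> puts chips on \<open>U - {v}\<close>, move one of them to \<open>v\<close> (this accounts for the \<open>- 2\<epsilon>\<^sub>v\<close>):
  what is left on the cycle has degree \<open>1\<close>, hence is L-effective.\<close>
lemma rank_at_least_if_contract_div:
  assumes "rank_at_least V1 e (contract_div U v f) k"
    and "\<And>j. k = Suc j \<Longrightarrow> rank_at_least V1 e (\<lambda>w. contract_div U v f w - 2 * eps v w) j"
  shows "rank_at_least V e f k"
  unfolding rank_at_least_def
proof (intro allI impI)
  fix lam assume lam: "effective V lam \<and> div_deg V lam = int k"
  have eff: "effective V1 (contract_div U v lam)" using lam effective_contract_div by blast
  have deg: "div_deg V1 (contract_div U v lam) = int k" using lam div_deg_contract_div by simp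
  define a where "a = (\<Sum>w\<in>U-{v}. lam w)"
  have "0 \<le> a" using lam U_subset unfolding a_def effective_def by (auto intro: sum_nonneg)
  show "L_effective V e (\<lambda>w. f w - lam w)"
  proof (cases "a = 0")
    case True
    then have lam_U: "lam w = 0" if "w \<in> U - {v}" for w
      using that lam U_subset finite_U sum_nonneg_eq_0_iff[of "U - {v}" lam]
      unfolding a_def effective_def by blast
    have "L_effective V1 e (\<lambda>w. contract_div U v f w - contract_div U v lam w)"
      using assms(1) eff deg unfolding rank_at_least_def by blast
    moreover have "L_effective U e (zero_div U v f)" using good_f unfolding good_def by blast
    ultimately show ?thesis
      unfolding L_effective_iff_split using lam_U
      by (intro exI[of _ 0]) (auto simp: contract_div_diff zero_div_diff zero_div_def
          elim: L_effective_cong[OF finite_U])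
  next
    case False
    define \<mu> where "\<mu> w = contract_div U v lam w - eps v w" for w
    have "1 \<le> contract_div U v lam v"
      using False \<open>0 \<le> a\<close> lam v_in_U U_subset sum_U_remove[of lam]
      unfolding contract_div_def a_def effective_def by force
    then have eff_\<mu>: "effective V1 \<mu>" using eff unfolding \<mu>_def effective_def eps_def by auto
    have deg_\<mu>: "div_deg V1 \<mu> = int k - 1"
      using deg div_deg_eps[OF finite_V1 v_in_V1, of 1] unfolding \<mu>_def div_deg_def
      by (simp add: sum_subtractf)
    moreover have "0 \<le> div_deg V1 \<mu>"
      using eff_\<mu> unfolding effective_def div_deg_def by (simp add: sum_nonneg)
    ultimately obtain j where k: "k = Suc j" by (cases k) auto
    then have "L_effective V1 e (\<lambda>w. contract_div U v f w - 2 * eps v w - \<mu> w)"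
      using assms(2)[OF k] eff_\<mu> deg_\<mu> unfolding rank_at_least_def by simp
    moreover have "L_effective U e (\<lambda>w. zero_div U v (\<lambda>w. f w - lam w) w + 1 * eps v w)"
      using sum_zero_div[of "\<lambda>w. f w - lam w"] div_deg_eps[OF finite_U v_in_U, of 1]
      by (intro cycle_L_effective[OF cycle_U]) (simp add: div_deg_def sum.distrib)
    ultimately show ?thesis
      unfolding L_effective_iff_split
      by (intro exI[of _ 1]) (auto simp: contract_div_diff \<mu>_def elim: L_effective_cong[OF finite_V1])
  qed
qed

lemma rank_at_least_iff_contract_div:
  "rank_at_least V e f k \<longleftrightarrow> rank_at_least V1 e (contract_div U v f) k \<and>
     (\<forall>j. k = Suc j \<longrightarrow> rank_at_least V1 e (\<lambda>w. contract_div U v f w - 2 * eps v w) j)"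
  using rank_at_least_contract_div rank_at_least_contract_div_minus_2 rank_at_least_if_contract_div
  by blast

theorem div_rank_eq_min:
  "div_rank V e f = min (div_rank V1 e (contract_div U v f))
                        (div_rank V1 e (\<lambda>w. contract_div U v f w - 2 * eps v w) + 1)"
    (is "_ = min ?r (?r2 + 1)")
proof (rule int_eq_if_nat_le_iff)
  show "-1 \<le> div_rank V e f" by (rule div_rank_ge_minus_1)
  show "-1 \<le> min ?r (?r2 + 1)"
    using div_rank_ge_minus_1[of V1 e "contract_div U v f"]
      div_rank_ge_minus_1[of V1 e "\<lambda>w. contract_div U v f w - 2 * eps v w"] by linarith
  fix k :: nat
  have "V \<noteq> {}" "V1 \<noteq> {}" using v_in_V1 V1_subset by auto
  then have "int k \<le> div_rank V e f \<longleftrightarrow> int k \<le> ?r \<and> (\<forall>j. k = Suc j \<longrightarrow> int j \<le> ?r2)"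
    by (simp add: le_div_rank_iff finite_V finite_V1 rank_at_least_iff_contract_div)
  also have "\<dots> \<longleftrightarrow> int k \<le> min ?r (?r2 + 1)"
    using div_rank_ge_minus_1[of V1 e "\<lambda>w. contract_div U v f w - 2 * eps v w"] by (cases k) auto
  finally show "int k \<le> div_rank V e f \<longleftrightarrow> int k \<le> min ?r (?r2 + 1)" .
qed

end

theorem mainTheorem5:
  fixes V V1 U :: "'a set" and e :: "'a \<Rightarrow> 'a \<Rightarrow> nat" and v :: 'a and f :: "'a \<Rightarrow> int"
  assumes "graph V e"
    and "cut_vertex V e v"
    and "decomposes V e v V1 U"
    and "is_cycle U e"
    and "good U e (zero_div U v f)"
  shows "let r = div_rank V1 e (contract_div U v f);
             r2 = div_rank V1 e (\<lambda>u. contract_div U v f u - 2 * eps v u)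
         in (r2 \<ge> r - 1 \<longrightarrow> div_rank V e f = r) \<and>
            (r2 = r - 2 \<longrightarrow> div_rank V e f = r - 1)"
proof -
  interpret cut_vertex_cycle e V V1 U v f
    using assms(1,3-5) unfolding graph_def decomposes_def by unfold_locales auto
  show ?thesis using div_rank_eq_min unfolding Let_def by simp
qed

end
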